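(* Let $a(x)=1+x^i$ and $b(x)=x^j+x^{j+k}$ be two polynomials of weight two in $\mathbb{F}_2[x]/\langle x^n-1\rangle$. Then the girth $g(G)$ of the Tanner graph associated with the generalized bicycle code defined by $a(x)$ and $b(x)$ satisfies $g(G)\le 8$.
   Context: The Tanner graph of the GB code defined by $a(x)=\sum a_tx^t$, $b(x)=\sum b_tx^t$ is the bipartite graph with $n$ check nodes $x_0,\dots,x_{n-1}$ (X-checks) and $2n$ qubit nodes $q_0,\dots,q_{n-1},q'_0,\dots,q'_{n-1}$, where $x_t$ is adjacent to $q_c$ iff $a_{t-c}=1$ and to $q'_c$ iff $b_{t-c}=1$ (indices mod $n$). The girth is the length of a shortest cycle. *)

theory Defs
  imports "HOL-Computational_Algebra.Polynomial" "HOL-Library.Z2" "HOL-Library.Extended_Nat"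
begin

text \<open>The image of p in
  F2[x]/(x^n - 1) has t-th coefficient (0 <= t < n) equal to the sum of the
  coefficients of p at exponents congruent to t modulo n.\<close>

definition cyc_coeff :: "nat \<Rightarrow> bit poly \<Rightarrow> nat \<Rightarrow> bit" where
  "cyc_coeff n p t = (\<Sum>e\<in>{e. e \<le> degree p \<and> e mod n = t mod n}. coeff p e)"

definition cyc_weight :: "nat \<Rightarrow> bit poly \<Rightarrow> nat" where
  "cyc_weight n p = card {t. t < n \<and> cyc_coeff n p t \<noteq> 0}"

text \<open>Vertices of the Tanner graph: X-checks x_t, qubits q_c and q'_c.\<close>
datatype tvert = XC nat | QL nat | QR nat

definition gb_edge :: "nat \<Rightarrow> bit poly \<Rightarrow> bit poly \<Rightarrow> tvert \<Rightarrow> tvert \<Rightarrow> bool" where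
  "gb_edge n a b u v = (case (u, v) of
      (XC t, QL c) \<Rightarrow> t < n \<and> c < n \<and> cyc_coeff n a ((t + n - c) mod n) = 1
    | (XC t, QR c) \<Rightarrow> t < n \<and> c < n \<and> cyc_coeff n b ((t + n - c) mod n) = 1
    | _ \<Rightarrow> False)"

definition gb_adj :: "nat \<Rightarrow> bit poly \<Rightarrow> bit poly \<Rightarrow> tvert \<Rightarrow> tvert \<Rightarrow> bool" where
  "gb_adj n a b u v = (gb_edge n a b u v \<or> gb_edge n a b v u)"

definition gb_cycle :: "nat \<Rightarrow> bit poly \<Rightarrow> bit poly \<Rightarrow> tvert list \<Rightarrow> bool" where
  "gb_cycle n a b vs = (length vs \<ge> 3 \<and> distinct vs \<and>
     (\<forall>k < length vs. gb_adj n a b (vs ! k) (vs ! ((k + 1) mod length vs))))"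

text \<open>Girth: length of a shortest cycle (infinity if there is none).\<close>
definition gb_girth :: "nat \<Rightarrow> bit poly \<Rightarrow> bit poly \<Rightarrow> enat" where
  "gb_girth n a b = (INF vs \<in> {vs. gb_cycle n a b vs}. enat (length vs))"

end

theory Submission
  imports Defs
begin

text \<open>Write \<open>a = x^u + x^v\<close>, \<open>b = x^w + x^z\<close> and put \<open>i = v - u\<close>, \<open>k = z - w\<close> in \<open>\<int>/n\<close>.
  Passing from a check through an \<open>a\<close>-qubit shifts its index by \<open>\<plusminus>i\<close>, through a \<open>b\<close>-qubit
  by \<open>\<plusminus>k\<close>; since the shifts commute, the walk
  \<open>x_0, q_(-u), x_i, q'_(i-w), x_(i+k), q_(k-u), x_k, q'_(-w)\<close> closes up.
  Weight two means \<open>i, k \<noteq> 0\<close>, so this walk is an 8-cycle unless \<open>i = \<plusminus>k\<close>, and in those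
  two cases its first three vertices together with \<open>q'_(-w)\<close> resp. \<open>q'_(i-w)\<close> form a 4-cycle.\<close>

lemma cyc_coeff_conv_sum_le:
  assumes "degree p \<le> D"
  shows "cyc_coeff n p t = (\<Sum>e\<in>{e. e \<le> D \<and> e mod n = t mod n}. coeff p e)"
  unfolding cyc_coeff_def
  by (rule sum.mono_neutral_left) (use assms in \<open>auto simp: coeff_eq_0 dest: le_degree\<close>)

lemma cyc_coeff_add: "cyc_coeff n (p + q) t = cyc_coeff n p t + cyc_coeff n q t"
proof -
  define D where "D = max (degree p) (degree q)"
  have "degree (p + q) \<le> D" "degree p \<le> D" "degree q \<le> D"
    unfolding D_def by (auto intro: degree_add_le)
  then show ?thesis
    by (simp only: cyc_coeff_conv_sum_le coeff_add sum.distrib)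
qed

lemma cyc_coeff_monom: "cyc_coeff n (monom 1 u) t = of_bool (u mod n = t mod n)"
  by (subst cyc_coeff_conv_sum_le[of _ u]) (auto simp: coeff_monom degree_monom_le)

lemma cyc_coeff_binomial:
  "cyc_coeff n (monom 1 u + monom 1 v) t = of_bool (u mod n = t mod n) + of_bool (v mod n = t mod n)"
  by (simp add: cyc_coeff_add cyc_coeff_monom)

lemma cyc_weight_binomial_eq_0:
  assumes "u mod n = v mod n"
  shows "cyc_weight n (monom 1 u + monom 1 v) = 0"
  using assms by (simp add: cyc_weight_def cyc_coeff_binomial)

text \<open>Vertices are indexed by integer exponents reduced modulo \<open>n\<close>, so that the index
  arithmetic of the cycles happens in \<open>\<int>\<close> rather than with truncated subtraction.\<close>

definition check_vertex :: "nat \<Rightarrow> int \<Rightarrow> tvert" where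
  "check_vertex n e = XC (nat (e mod int n))"

definition left_qubit :: "nat \<Rightarrow> int \<Rightarrow> tvert" where
  "left_qubit n e = QL (nat (e mod int n))"

definition right_qubit :: "nat \<Rightarrow> int \<Rightarrow> tvert" where
  "right_qubit n e = QR (nat (e mod int n))"

lemma vertex_eq_iff:
  assumes "n > 0"
  shows "check_vertex n e = check_vertex n f \<longleftrightarrow> int n dvd e - f"
    and "left_qubit n e = left_qubit n f \<longleftrightarrow> int n dvd e - f"
    and "right_qubit n e = right_qubit n f \<longleftrightarrow> int n dvd e - f"
  using assms by (simp_all add: check_vertex_def left_qubit_def right_qubit_def
      eq_nat_nat_iff mod_eq_dvd_iff)

lemma vertex_kinds_distinct [simp]:
  "check_vertex n e \<noteq> left_qubit n f" "check_vertex n e \<noteq> right_qubit n f"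
  "left_qubit n e \<noteq> right_qubit n f"
  "left_qubit n f \<noteq> check_vertex n e" "right_qubit n f \<noteq> check_vertex n e"
  "right_qubit n f \<noteq> left_qubit n e"
  by (simp_all add: check_vertex_def left_qubit_def right_qubit_def)

lemma nat_mod_diff_residues:
  assumes "n > 0"
  shows "(nat (e mod int n) + n - nat (f mod int n)) mod n = nat ((e - f) mod int n)"
proof -
  have "nat (f mod int n) \<le> n"
    using assms by (simp add: nat_le_iff less_imp_le)
  then have "int ((nat (e mod int n) + n - nat (f mod int n)) mod n)
      = (e mod int n + int n - f mod int n) mod int n"
    using assms by (simp add: zmod_int of_nat_diff)
  also have "\<dots> = (e - f) mod int n"
    by (metis diff_add_eq mod_add_self2 mod_diff_eq)
  finally show ?thesis
    by simp
qed

lemma gb_adj_left_qubit_iff: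
  assumes "n > 0"
  shows "gb_adj n a b (check_vertex n e) (left_qubit n f)
      \<longleftrightarrow> cyc_coeff n a (nat ((e - f) mod int n)) = 1"
    and "gb_adj n a b (left_qubit n f) (check_vertex n e)
      \<longleftrightarrow> cyc_coeff n a (nat ((e - f) mod int n)) = 1"
  using assms
  by (simp_all add: gb_adj_def gb_edge_def check_vertex_def left_qubit_def
      nat_mod_diff_residues nat_less_iff)

lemma gb_adj_right_qubit_iff:
  assumes "n > 0"
  shows "gb_adj n a b (check_vertex n e) (right_qubit n f)
      \<longleftrightarrow> cyc_coeff n b (nat ((e - f) mod int n)) = 1"
    and "gb_adj n a b (right_qubit n f) (check_vertex n e)
      \<longleftrightarrow> cyc_coeff n b (nat ((e - f) mod int n)) = 1"
  using assms
  by (simp_all add: gb_adj_def gb_edge_def check_vertex_def right_qubit_def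
      nat_mod_diff_residues nat_less_iff)

lemma mod_eq_iff_int_dvd_diff: "u mod n = v mod n \<longleftrightarrow> int n dvd int v - int u"
  by (metis of_nat_eq_iff zmod_int mod_eq_dvd_iff dvd_diff_commute)

lemma cyc_coeff_binomial_eq_1_iff:
  assumes "n > 0" and "u mod n \<noteq> v mod n"
  shows "cyc_coeff n (monom 1 u + monom 1 v) (nat (d mod int n)) = 1
    \<longleftrightarrow> int n dvd d - int u \<or> int n dvd d - int v"
proof -
  have residue: "w mod n = nat (d mod int n) mod n \<longleftrightarrow> int n dvd d - int w" for w
  proof -
    have "w mod n = nat (d mod int n) mod n \<longleftrightarrow> int (w mod n) = int (nat (d mod int n) mod n)"
      by (rule of_nat_eq_iff[symmetric])
    also have "\<dots> \<longleftrightarrow> int w mod int n = d mod int n"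
      using assms(1) by (simp add: zmod_int)
    finally show ?thesis
      by (simp add: mod_eq_dvd_iff dvd_diff_commute)
  qed
  show ?thesis
    using assms(2) unfolding cyc_coeff_binomial residue[symmetric] by auto
qed

lemma gb_cycle_iff_list_all2:
  "gb_cycle n a b vs \<longleftrightarrow>
     3 \<le> length vs \<and> distinct vs \<and> list_all2 (gb_adj n a b) vs (rotate1 vs)"
  by (auto simp: gb_cycle_def list_all2_conv_all_nth nth_rotate1)

lemma gb_girth_le:
  assumes "gb_cycle n a b vs" and "length vs \<le> m"
  shows "gb_girth n a b \<le> enat m"
proof -
  have "gb_girth n a b \<le> enat (length vs)"
    unfolding gb_girth_def using assms(1) by (rule INF_lower[OF CollectI])
  also have "\<dots> \<le> enat m"
    using assms(2) by simp
  finally show ?thesis .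
qed

context
  fixes n u v w z :: nat
  assumes n_pos: "n > 0"
    and a_residues: "u mod n \<noteq> v mod n"
    and b_residues: "w mod n \<noteq> z mod n"
begin

lemma gb_adj_binomials:
  "gb_adj n (monom 1 u + monom 1 v) b (check_vertex n e) (left_qubit n f)
     \<longleftrightarrow> int n dvd e - f - int u \<or> int n dvd e - f - int v"
  "gb_adj n (monom 1 u + monom 1 v) b (left_qubit n f) (check_vertex n e)
     \<longleftrightarrow> int n dvd e - f - int u \<or> int n dvd e - f - int v"
  "gb_adj n a (monom 1 w + monom 1 z) (check_vertex n e) (right_qubit n f)
     \<longleftrightarrow> int n dvd e - f - int w \<or> int n dvd e - f - int z"
  "gb_adj n a (monom 1 w + monom 1 z) (right_qubit n f) (check_vertex n e)
     \<longleftrightarrow> int n dvd e - f - int w \<or> int n dvd e - f - int z"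
  using n_pos a_residues b_residues
  by (simp_all add: gb_adj_left_qubit_iff gb_adj_right_qubit_iff cyc_coeff_binomial_eq_1_iff)

lemmas binomial_cycle_simps =
  gb_cycle_iff_list_all2 gb_adj_binomials vertex_eq_iff[OF n_pos]
  dvd_minus_iff[of "int n" "i + k" for i k, simplified] \<comment> \<open>\<open>0 - (i + k)\<close> simplifies to \<open>- i - k\<close>\<close>

context
  fixes i k :: int
  assumes v_eq: "int v = int u + i"
    and z_eq: "int z = int w + k"
    and n_not_dvd_i: "\<not> int n dvd i"
begin

lemma gb_cycle_8_binomials:
  assumes "\<not> int n dvd k" and "\<not> int n dvd i - k" and "\<not> int n dvd i + k"
  shows "gb_cycle n (monom 1 u + monom 1 v) (monom 1 w + monom 1 z)
     [check_vertex n 0, left_qubit n (- int u), check_vertex n i, right_qubit n (i - int w),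
      check_vertex n (i + k), left_qubit n (k - int u), check_vertex n k, right_qubit n (- int w)]"
  using assms v_eq z_eq n_not_dvd_i by (simp add: binomial_cycle_simps)

lemma gb_cycle_4_binomials_if_dvd_diff:
  assumes "int n dvd i - k"
  shows "gb_cycle n (monom 1 u + monom 1 v) (monom 1 w + monom 1 z)
     [check_vertex n 0, left_qubit n (- int u), check_vertex n i, right_qubit n (- int w)]"
  using assms v_eq z_eq n_not_dvd_i by (simp add: binomial_cycle_simps)

lemma gb_cycle_4_binomials_if_dvd_sum:
  assumes "int n dvd i + k"
  shows "gb_cycle n (monom 1 u + monom 1 v) (monom 1 w + monom 1 z)
     [check_vertex n 0, left_qubit n (- int u), check_vertex n i, right_qubit n (i - int w)]"
  using assms v_eq z_eq n_not_dvd_i by (simp add: binomial_cycle_simps)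

end

lemma gb_girth_binomials_le_8:
  "gb_girth n (monom 1 u + monom 1 v) (monom 1 w + monom 1 z) \<le> 8"
proof -
  define i k where "i = int v - int u" and "k = int z - int w"
  have v_eq: "int v = int u + i" and z_eq: "int z = int w + k"
    unfolding i_def k_def by simp_all
  have n_not_dvd_i: "\<not> int n dvd i" and n_not_dvd_k: "\<not> int n dvd k"
    using a_residues b_residues unfolding i_def k_def mod_eq_iff_int_dvd_diff by simp_all
  consider "int n dvd i - k" | "int n dvd i + k" | "\<not> int n dvd i - k" "\<not> int n dvd i + k"
    by blast
  then obtain vs where "gb_cycle n (monom 1 u + monom 1 v) (monom 1 w + monom 1 z) vs"
    and "length vs \<le> 8"
  proof cases
    case 1
    from gb_cycle_4_binomials_if_dvd_diff[OF v_eq z_eq n_not_dvd_i this] show thesis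
      by (rule that) simp
  next
    case 2
    from gb_cycle_4_binomials_if_dvd_sum[OF v_eq z_eq n_not_dvd_i this] show thesis
      by (rule that) simp
  next
    case 3
    from gb_cycle_8_binomials[OF v_eq z_eq n_not_dvd_i n_not_dvd_k this] show thesis
      by (rule that) simp
  qed
  then show ?thesis
    using gb_girth_le numeral_eq_enat by metis
qed

end

theorem lemma4:
  fixes n i j k :: nat and a b :: "bit poly"
  assumes "n > 0"
    and "a = 1 + monom 1 i"
    and "b = monom 1 j + monom 1 (j + k)"
    and "cyc_weight n a = 2"
    and "cyc_weight n b = 2"
  shows "gb_girth n a b \<le> 8"
proof -
  have a_binomial: "a = monom 1 0 + monom 1 i"
    using assms(2) by (simp add: monom_0 one_pCons)
  have "0 mod n \<noteq> i mod n"
    using assms(4) a_binomial cyc_weight_binomial_eq_0 by fastforce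
  moreover have "j mod n \<noteq> (j + k) mod n"
    using assms(3,5) cyc_weight_binomial_eq_0 by fastforce
  ultimately show ?thesis
    unfolding a_binomial assms(3) by (rule gb_girth_binomials_le_8[OF assms(1)])
qed

end
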